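(* Let $n\ge1$. For any $h\in\{1,\dots,n\}$ and $a\in\mathbb{Z}$, the set $T(h,a)$ of all tagged edges of $\mathcal{P}_{n,\infty}$ with starting point $(h,a)$, namely \[T(h,a)=\{E^{+1}_{(h,a),(h,a)},E^{-1}_{(h,a),(h,a)}\}\cup\{E_{(h,a),(k,b)}\mid (k,b)\text{ a boundary marked point with } (k,b)\notin\{(h,a),(h,a+1)\}\},\] is a triangulation of $\mathcal{P}_{n,\infty}$. Likewise, for any $h\in\{1,\dots,n\}$ and $a\in\mathbb{Z}\cup\{\infty\}$, the set of all tagged edges of $\mathcal{P}_{\overline{n,\infty}}$ with starting point $(h,a)$ is a triangulation of $\mathcal{P}_{\overline{n,\infty}}$.
   Context: $\mathcal{P}_{n,\infty}$: the closed unit disk $D$ with a puncture at the origin and boundary marked points $(h,a)$, $h\in\{1,\dots,n\}$, $a\in\mathbb{Z}$, arranged counterclockwise so that block $h$ is ordered by increasing $a$, the blocks appear in cyclic order $1,\dots,n$, and the marked points accumulate from both sides exactly at $n$ unmarked points $a_1,\dots,a_n$ ($a_h$ between block $h$ and block $h+1$, indices mod $n$). $\mathcal{P}_{\overline{n,\infty}}$ is the same but with each accumulation point $a_h$ also a marked point, labeled $(h,\infty)$, with the convention $\infty\pm k=\infty$. For a boundary marked point $P=(h,a)$ write $P^+=(h,a+1)$. Tagged edges: for boundary marked points $P\ne Q$ with $Q\ne P^+$, the edge $E_{P,Q}$ is the homotopy class (in $D$ minus the puncture, relative endpoints) of a simple path from $P$ to $Q$ through the interior minus the puncture, homotopic to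 the counterclockwise boundary path from $P$ to $Q$; for each boundary marked point $P$ there are two tagged edges $E^{\pm1}_{P,P}$, drawn as the segment from $P$ to the puncture, tagged when the sign is $-1$. The starting point of $E_{P,Q}$ and of $E^{\pm1}_{P,P}$ is $P$. Crossing number $\mathfrak c(E,F)$ of distinct tagged edges: if neither goes to the puncture, the minimal number of intersection points in the interior of the punctured disk among representatives; if exactly one is a puncture segment, the minimal number of interior intersection points of that segment with representatives of the other; if $E=E^{\epsilon}_{P,P}$, $F=E^{\lambda}_{Q,Q}$, then $\mathfrak c=1$ if $P\ne Q$ and $\epsilon\ne\lambda$, and $0$ otherwise. $E$ crosses $F$ if $\mathfrak c(E,F)\ne0$. A triangulation is a maximal set of pairwise non-crossing tagged edges. *)

theory Defs
  imports "HOL-Analysis.Analysis" "HOL-Library.Extended_Nat"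
begin

datatype lab = Fin int | Infty

type_synonym mpt = "nat \<times> lab"

text \<open>Marked points; the flag cl selects the closed version (accumulation points marked).\<close>
definition marked :: "nat \<Rightarrow> bool \<Rightarrow> mpt set" where
  "marked n cl = {(h, Fin a) | h a. 1 \<le> h \<and> h \<le> n}
                \<union> (if cl then {(h, Infty) | h. 1 \<le> h \<and> h \<le> n} else {})"

fun succ_pt :: "mpt \<Rightarrow> mpt" where
  "succ_pt (h, Fin a) = (h, Fin (a + 1))"
| "succ_pt (h, Infty) = (h, Infty)"

text \<open>Concrete placement: block h occupies the open arc of angles
  (2 pi (h-1)/n, 2 pi h/n), increasing in a, accumulating at both ends;
  the accumulation point a_h sits at angle 2 pi h / n.\<close>
definition sigma :: "int \<Rightarrow> real" where
  "sigma a = (1 + real_of_int a / (1 + \<bar>real_of_int a\<bar>)) / 2"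

fun angle :: "nat \<Rightarrow> mpt \<Rightarrow> real" where
  "angle n (h, Fin a) = 2 * pi * (real h - 1 + sigma a) / real n"
| "angle n (h, Infty) = 2 * pi * real h / real n"

definition pos :: "nat \<Rightarrow> mpt \<Rightarrow> complex" where
  "pos n P = cis (angle n P)"

definition ccw_path :: "nat \<Rightarrow> mpt \<Rightarrow> mpt \<Rightarrow> real \<Rightarrow> complex" where
  "ccw_path n P Q = (\<lambda>t. cis (angle n P +
      t * (2 * pi * frac ((angle n Q - angle n P) / (2 * pi)))))"

definition pdisk :: "complex set" where "pdisk = cball 0 1 - {0}"
definition pint :: "complex set" where "pint = ball 0 1 - {0}"

text \<open>Tagged edges: Arc P Q is E_{P,Q}; Punct P True / False is E^{+1}_{P,P} / E^{-1}_{P,P}.\<close>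
datatype tedge = Arc mpt mpt | Punct mpt bool

fun start :: "tedge \<Rightarrow> mpt" where
  "start (Arc P Q) = P"
| "start (Punct P s) = P"

definition tagged_edges :: "nat \<Rightarrow> bool \<Rightarrow> tedge set" where
  "tagged_edges n cl =
     {Arc P Q | P Q. P \<in> marked n cl \<and> Q \<in> marked n cl \<and> P \<noteq> Q \<and> Q \<noteq> succ_pt P}
     \<union> {Punct P s | P s. P \<in> marked n cl}"

text \<open>Representatives of the homotopy class E_{P,Q}: simple paths from P to Q through the
  interior minus the puncture, homotopic rel endpoints in D minus the puncture to the
  counterclockwise boundary path.\<close>
definition reps :: "nat \<Rightarrow> mpt \<Rightarrow> mpt \<Rightarrow> (real \<Rightarrow> complex) set" where
  "reps n P Q = {g. arc g \<and> pathstart g = pos n P \<and> pathfinish g = pos n Q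
      \<and> (\<forall>t\<in>{0<..<1}. g t \<in> pint)
      \<and> homotopic_paths pdisk g (ccw_path n P Q)}"

definition icount :: "complex set \<Rightarrow> enat" where
  "icount S = (if finite S then enat (card S) else \<infinity>)"

fun crossing :: "nat \<Rightarrow> tedge \<Rightarrow> tedge \<Rightarrow> enat" where
  "crossing n (Arc P Q) (Arc R S) =
     (INF g \<in> reps n P Q. INF g' \<in> reps n R S.
        icount (path_image g \<inter> path_image g' \<inter> pint))"
| "crossing n (Punct P s) (Arc R S) =
     (INF g' \<in> reps n R S. icount (closed_segment (pos n P) 0 \<inter> path_image g' \<inter> pint))"
| "crossing n (Arc R S) (Punct P s) =
     (INF g' \<in> reps n R S. icount (closed_segment (pos n P) 0 \<inter> path_image g' \<inter> pint))"
| "crossing n (Punct P s) (Punct Q t) = (if P \<noteq> Q \<and> s \<noteq> t then 1 else 0)"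

definition crosses :: "nat \<Rightarrow> tedge \<Rightarrow> tedge \<Rightarrow> bool" where
  "crosses n E F \<longleftrightarrow> crossing n E F \<noteq> 0"

definition tagged_triangulation :: "nat \<Rightarrow> bool \<Rightarrow> tedge set \<Rightarrow> bool" where
  "tagged_triangulation n cl T \<longleftrightarrow> T \<subseteq> tagged_edges n cl
     \<and> (\<forall>E\<in>T. \<forall>F\<in>T. E \<noteq> F \<longrightarrow> \<not> crosses n E F)
     \<and> (\<forall>E\<in>tagged_edges n cl - T. \<exists>F\<in>T. crosses n E F)"

end

theory Submission
  imports Defs "HOL-Complex_Analysis.Riemann_Mapping"
begin

text \<open>Every edge starting at \<open>P\<close> has a representative that runs along the counterclockwise
  boundary arc, pushed slightly into the disk, or along the radius to the puncture; two of these
  meet only at \<open>P\<close>, so the edges starting at \<open>P\<close> pairwise do not cross. Conversely, take an edge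
  not starting at \<open>P\<close>. A tagged radius at \<open>R \<noteq> P\<close> crosses the oppositely tagged radius at \<open>P\<close>.
  For \<open>E_{R,S}\<close>, the winding number about the puncture is a homotopy invariant, so along every
  representative a continuous argument increases in total by the counterclockwise angle from \<open>R\<close>
  to \<open>S\<close>. If \<open>P\<close> lies strictly between \<open>R\<close> and \<open>S\<close>, the argument passes the direction of \<open>P\<close> and
  the representative meets the radius at \<open>P\<close>. Otherwise pick a marked point \<open>X \<noteq> P\<^sup>+\<close> strictly
  between \<open>R\<close> and \<open>S\<close>: the endpoints of \<open>E_{R,S}\<close> and \<open>E_{P,X}\<close> interlace, and in coordinates
  (argument, modulus) the Fashoda theorem makes any two of their representatives meet.\<close>

unbundle no fps_syntax

section \<open>Positions of the marked points\<close>

lemma sigma_less_iff [simp]: "sigma a < sigma b \<longleftrightarrow> a < b"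
proof -
  have "sigma a < sigma b \<longleftrightarrow> real_of_int a / (1 + \<bar>real_of_int a\<bar>) < real_of_int b / (1 + \<bar>real_of_int b\<bar>)"
    unfolding sigma_def by (simp only: divide_less_cancel add_less_cancel_left) simp
  then show ?thesis
    by (simp only: real_shrink_lt of_int_less_iff)
qed

lemma strict_mono_sigma: "strict_mono sigma"
  by (simp add: strict_mono_def)

lemma sigma_eq_iff [simp]: "sigma a = sigma b \<longleftrightarrow> a = b"
  using strict_mono_eq[OF strict_mono_sigma] .

lemma sigma_gt_0: "0 < sigma a" and sigma_lt_1: "sigma a < 1"
proof -
  define s where "s = real_of_int a / (1 + \<bar>real_of_int a\<bar>)"
  have "\<bar>s\<bar> < 1"
    using real_shrink_Galois s_def by blast
  moreover have "sigma a = (1 + s) / 2"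
    unfolding sigma_def s_def ..
  ultimately show "0 < sigma a" and "sigma a < 1"
    by auto
qed

lemma sigma_nonpos: "a \<le> 0 \<Longrightarrow> sigma a = 1 / (1 - real_of_int a) / 2"
  unfolding sigma_def by (simp add: field_simps)

lemma exists_sigma_less:
  assumes "0 < \<epsilon>"
  obtains c where "c < N" and "sigma c < \<epsilon>"
proof
  define c where "c = - \<lceil>1 / \<epsilon>\<rceil> - \<bar>N\<bar> - 1"
  have ceil: "1 / \<epsilon> \<le> real_of_int \<lceil>1 / \<epsilon>\<rceil>" "0 < \<lceil>1 / \<epsilon>\<rceil>"
    using assms by simp_all
  then show "c < N"
    unfolding c_def by linarith
  have c: "c \<le> 0" "1 / \<epsilon> < 1 - real_of_int c"
    using ceil unfolding c_def by linarith+
  then have "1 < (1 - real_of_int c) * \<epsilon>"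
    using assms by (simp add: pos_divide_less_eq)
  define e where "e = 1 / (1 - real_of_int c)"
  have "e < \<epsilon>" "0 < e"
    using c \<open>1 < (1 - real_of_int c) * \<epsilon>\<close> by (simp_all add: e_def pos_divide_less_eq mult.commute)
  moreover have "sigma c = e / 2"
    unfolding e_def by (rule sigma_nonpos[OF c(1)])
  ultimately show "sigma c < \<epsilon>"
    by linarith
qed

lemma marked_cases:
  assumes "P \<in> marked n cl"
  obtains h a where "P = (h, Fin a)" "1 \<le> h" "h \<le> n"
    | h where "P = (h, Infty)" "1 \<le> h" "h \<le> n" "cl"
  using assms unfolding marked_def by (auto split: if_splits)

lemma marked_Fin: "1 \<le> h \<Longrightarrow> h \<le> n \<Longrightarrow> (h, Fin a) \<in> marked n cl"
  unfolding marked_def by auto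

definition turn :: "nat \<Rightarrow> mpt \<Rightarrow> real" where
  "turn n P = angle n P / (2 * pi)"

lemma angle_eq_turn: "angle n P = 2 * pi * turn n P"
  by (simp add: turn_def)

lemma turn_Fin [simp]: "turn n (h, Fin a) = (real h - 1 + sigma a) / real n"
  and turn_Infty [simp]: "turn n (h, Infty) = real h / real n"
  by (simp_all add: turn_def)

lemma turn_pos:
  assumes "P \<in> marked n cl"
  shows "0 < turn n P"
  using assms by (cases rule: marked_cases) (auto intro!: divide_pos_pos add_nonneg_pos sigma_gt_0)

lemma turn_le_1:
  assumes "P \<in> marked n cl"
  shows "turn n P \<le> 1"
  using assms
proof (cases rule: marked_cases)
  case (1 h a)
  then have "real h - 1 + sigma a \<le> real n"
    using sigma_lt_1[of a] of_nat_le_iff[of h n] by linarith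
  then show ?thesis
    using 1 by (simp add: divide_le_eq_1)
next
  case (2 h)
  then show ?thesis
    by (simp add: divide_le_eq_1)
qed

lemma ceiling_n_turn:
  assumes "P \<in> marked n cl"
  shows "\<lceil>real n * turn n P\<rceil> = int (fst P)"
  using assms
proof (cases rule: marked_cases)
  case (1 h a)
  then show ?thesis
    using sigma_gt_0[of a] sigma_lt_1[of a] by (intro ceiling_unique) simp_all
qed simp

lemma inj_on_turn: "inj_on (turn n) (marked n cl)"
proof
  fix P Q assume P: "P \<in> marked n cl" and Q: "Q \<in> marked n cl" and eq: "turn n P = turn n Q"
  have "fst P = fst Q"
    using ceiling_n_turn[OF P] ceiling_n_turn[OF Q] eq by simp
  moreover have "real n \<noteq> 0"
    using P by (cases rule: marked_cases) simp_all
  ultimately show "P = Q"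
    using P Q eq by (auto elim!: marked_cases simp: less_imp_neq[OF sigma_lt_1])
qed

lemma turn_not_between_consecutive:
  assumes "S \<in> marked n cl"
  shows "turn n S \<le> turn n (k, Fin b) \<or> turn n (k, Fin (b + 1)) \<le> turn n S"
proof -
  have "real n > 0"
    using assms by (cases rule: marked_cases) simp_all
  moreover have "n * turn n S \<le> real k - 1 + sigma b \<or> real k - 1 + sigma (b + 1) \<le> n * turn n S"
    using assms
  proof (cases rule: marked_cases)
    case (1 j c)
    have "c \<le> b \<or> b + 1 \<le> c"
      by linarith
    then have "sigma c \<le> sigma b \<or> sigma (b + 1) \<le> sigma c"
      using strict_mono_sigma by (auto simp: strict_mono_less_eq)
    moreover have "real j + 1 \<le> real k \<or> j = k \<or> real k + 1 \<le> real j"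
      using of_nat_le_iff[of "j + 1" k] of_nat_le_iff[of "k + 1" j] by linarith
    ultimately show ?thesis
      using 1 sigma_gt_0[of c] sigma_lt_1[of c] sigma_gt_0[of b] sigma_lt_1[of "b + 1"]
      by auto
  next
    case (2 j)
    have "real j + 1 \<le> real k \<or> real k \<le> real j"
      using of_nat_le_iff[of "j + 1" k] by linarith
    then show ?thesis
      using 2 sigma_gt_0[of b] sigma_lt_1[of "b + 1"] by auto
  qed
  ultimately show ?thesis
    by (auto simp: field_simps)
qed

definition ccw_dist :: "nat \<Rightarrow> mpt \<Rightarrow> mpt \<Rightarrow> real" where
  "ccw_dist n A B = frac (turn n B - turn n A)"

lemma ccw_dist_nonneg: "0 \<le> ccw_dist n A B"
  by (simp add: ccw_dist_def)

lemma ccw_dist_lt_1: "ccw_dist n A B < 1"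
  by (simp add: ccw_dist_def frac_lt_1)

lemma ccw_dist_eq:
  assumes "A \<in> marked n cl" "B \<in> marked n cl"
  shows "ccw_dist n A B =
    (if turn n A \<le> turn n B then turn n B - turn n A else turn n B - turn n A + 1)"
  using turn_pos[OF assms(1)] turn_le_1[OF assms(1)] turn_pos[OF assms(2)] turn_le_1[OF assms(2)]
  by (auto simp: ccw_dist_def frac_eq frac_unique_iff)

lemma ccw_dist_pos:
  assumes "A \<in> marked n cl" "B \<in> marked n cl" "A \<noteq> B"
  shows "0 < ccw_dist n A B"
proof -
  have "turn n A \<noteq> turn n B"
    using inj_on_turn assms by (auto dest: inj_onD)
  then show ?thesis
    using ccw_dist_eq[OF assms(1,2)] turn_le_1[OF assms(1)] turn_pos[OF assms(2)] by auto
qed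

lemma inj_on_ccw_dist:
  assumes "A \<in> marked n cl"
  shows "inj_on (ccw_dist n A) (marked n cl)"
proof
  fix B C assume B: "B \<in> marked n cl" and C: "C \<in> marked n cl"
    and eq: "ccw_dist n A B = ccw_dist n A C"
  have "turn n B = turn n C"
    using eq ccw_dist_eq[OF assms B] ccw_dist_eq[OF assms C] turn_pos[OF assms] turn_le_1[OF assms]
      turn_pos[OF B] turn_le_1[OF B] turn_pos[OF C] turn_le_1[OF C]
    by (auto split: if_splits)
  then show "B = C"
    using inj_on_turn B C by (auto dest: inj_onD)
qed

lemma ccw_dist_consecutive_less:
  assumes A: "(k, Fin b) \<in> marked n cl" and S: "S \<in> marked n cl"
    and "S \<noteq> (k, Fin b)" "S \<noteq> (k, Fin (b + 1))"
  shows "ccw_dist n (k, Fin b) (k, Fin (b + 1)) < ccw_dist n (k, Fin b) S"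
proof -
  have X: "(k, Fin (b + 1)) \<in> marked n cl" and n: "real n > 0"
    using A by (cases rule: marked_cases; simp add: marked_Fin)+
  have "turn n (k, Fin b) < turn n (k, Fin (b + 1))"
    using n by (simp add: divide_strict_right_mono)
  moreover have "turn n S \<noteq> turn n (k, Fin b)" "turn n S \<noteq> turn n (k, Fin (b + 1))"
    using inj_onD[OF inj_on_turn _ S A] inj_onD[OF inj_on_turn _ S X] assms(3,4) by blast+
  ultimately show ?thesis
    using turn_not_between_consecutive[OF S, of k b] ccw_dist_eq[OF A S] ccw_dist_eq[OF A X]
      turn_pos[OF S] turn_le_1[OF X]
    by auto
qed

lemma ccw_dist_Infty_next_block:
  assumes "1 \<le> k" "k \<le> n"
  shows "ccw_dist n (k, Infty) (k mod n + 1, Fin c) = sigma c / real n"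
proof -
  have "turn n (k mod n + 1, Fin c) - turn n (k, Infty) = sigma c / real n - (if k < n then 0 else 1)"
    using assms by (cases "k < n") (auto simp: field_simps)
  moreover have "frac (y - 1) = frac y" for y :: real
    using frac_1_eq[of "y - 1"] by simp
  moreover have "frac (sigma c / real n) = sigma c / real n"
    using assms sigma_gt_0[of c] sigma_lt_1[of c] by (intro frac_eq_id) (simp add: divide_less_eq_1)
  ultimately show ?thesis
    by (simp add: ccw_dist_def)
qed

lemma marked_between_avoiding_succ:
  assumes R: "R \<in> marked n cl" and S: "S \<in> marked n cl" and P: "P \<in> marked n cl"
    and "R \<noteq> S" "S \<noteq> succ_pt R" "P \<noteq> R"
  obtains X where "X \<in> marked n cl" "X \<noteq> succ_pt P"
    "0 < ccw_dist n R X" "ccw_dist n R X < ccw_dist n R S"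
  using R
proof (cases rule: marked_cases)
  case (1 k b)
  let ?X = "(k, Fin (b + 1))"
  have "?X \<in> marked n cl"
    using 1 by (simp add: marked_Fin)
  moreover have "?X \<noteq> succ_pt P"
    using P \<open>P \<noteq> R\<close> 1 by (cases rule: marked_cases) auto
  moreover have "ccw_dist n R ?X < ccw_dist n R S"
    using ccw_dist_consecutive_less[of k b n cl S] R S assms(4,5) 1 by auto
  ultimately show ?thesis
    using that ccw_dist_pos[OF R] 1 by auto
next
  case (2 k)
  have "0 < ccw_dist n R S"
    using ccw_dist_pos[OF R S] assms(4) .
  then obtain c where c: "c < (case P of (_, Fin a) \<Rightarrow> a + 1 | _ \<Rightarrow> 0)"
    and small: "sigma c < ccw_dist n R S"
    using exists_sigma_less by blast
  let ?X = "(k mod n + 1, Fin c)"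
  have X: "?X \<in> marked n cl"
    using 2 by (intro marked_Fin) (simp_all add: Suc_leI)
  moreover have "?X \<noteq> succ_pt P"
    using P c by (cases rule: marked_cases) auto
  moreover have "ccw_dist n R ?X < ccw_dist n R S"
    using ccw_dist_Infty_next_block[of k n c] 2 small sigma_gt_0[of c]
    by (auto simp: divide_le_eq elim!: le_less_trans[rotated])
  ultimately show ?thesis
    using that ccw_dist_pos[OF R X] 2 by auto
qed

lemma angle_eq_ccw_dist:
  "angle n B = angle n A + 2 * pi * ccw_dist n A B + 2 * pi * real_of_int \<lfloor>turn n B - turn n A\<rfloor>"
  unfolding angle_eq_turn ccw_dist_def frac_def by (simp add: algebra_simps)

lemma ccw_dist_via:
  assumes "ccw_dist n R X < ccw_dist n R P"
  shows "ccw_dist n P X = ccw_dist n R X - ccw_dist n R P + 1"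
proof -
  have int: "turn n X - turn n P - (ccw_dist n R X - ccw_dist n R P + 1)
      = real_of_int (\<lfloor>turn n X - turn n R\<rfloor> - \<lfloor>turn n P - turn n R\<rfloor> - 1)"
    unfolding ccw_dist_def frac_def by simp
  show ?thesis
    unfolding ccw_dist_def[of n P X] frac_unique_iff
  proof (intro conjI)
    show "turn n X - turn n P - (ccw_dist n R X - ccw_dist n R P + 1) \<in> \<int>"
      by (simp only: int Ints_of_int)
    show "0 \<le> ccw_dist n R X - ccw_dist n R P + 1"
      using ccw_dist_nonneg[of n R X] ccw_dist_lt_1[of n R P] by linarith
    show "ccw_dist n R X - ccw_dist n R P + 1 < 1"
      using assms by linarith
  qed
qed

lemma cis_add_int_2pi [simp]: "cis (x + 2 * pi * real_of_int k) = cis x"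
  by (simp add: cis_mult[symmetric])

lemma cis_eq_cisE:
  assumes "cis a = cis b"
  obtains k :: int where "a = b + 2 * pi * real_of_int k"
proof -
  obtain m :: int where "\<i> * complex_of_real a = \<i> * complex_of_real b + of_int (2 * m) * pi * \<i>"
    using assms unfolding cis_conv_exp exp_eq by blast
  then have "Im (\<i> * complex_of_real a) = Im (\<i> * complex_of_real b + of_int (2 * m) * pi * \<i>)"
    by simp
  then have "a = b + 2 * pi * real_of_int m"
    by simp
  then show ?thesis
    by (rule that)
qed

lemma cis_eq_within_turn:
  assumes "cis (a + 2 * pi * x) = cis (a + 2 * pi * y)" "\<bar>x - y\<bar> < 1"
  shows "x = y"
proof -
  obtain m :: int where "a + 2 * pi * x = a + 2 * pi * y + 2 * pi * real_of_int m"
    using assms(1) by (rule cis_eq_cisE)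
  then have "2 * pi * (x - y - real_of_int m) = 0"
    by (simp add: algebra_simps)
  then have "x - y = real_of_int m"
    by simp
  with assms(2) have "m = 0"
    by linarith
  with \<open>x - y = real_of_int m\<close> show ?thesis
    by simp
qed

lemma polar_eq_imp:
  assumes "0 < r" "0 < r'" "complex_of_real r * cis a = complex_of_real r' * cis b"
  shows "r = r'" and "cis a = cis b"
proof -
  have "norm (complex_of_real r * cis a) = norm (complex_of_real r' * cis b)"
    using assms(3) by simp
  then show "r = r'"
    using assms(1,2) by (simp add: norm_mult)
  then show "cis a = cis b"
    using assms by simp
qed

lemma cis_angle_ccw_dist: "cis (angle n A + 2 * pi * ccw_dist n A B) = pos n B"
  using cis_add_int_2pi[of "angle n A + 2 * pi * ccw_dist n A B" "\<lfloor>turn n B - turn n A\<rfloor>"]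
  by (simp add: pos_def angle_eq_ccw_dist[of n B A])

lemma ccw_path_eq: "ccw_path n A B = (\<lambda>t. cis (angle n A + 2 * pi * (t * ccw_dist n A B)))"
proof -
  have "(angle n B - angle n A) / (2 * pi) = turn n B - turn n A"
    unfolding angle_eq_turn by (simp add: right_diff_distrib[symmetric])
  then show ?thesis
    unfolding ccw_path_def ccw_dist_def by (simp only: ac_simps)
qed

section \<open>Bowed representatives\<close>

definition bow :: "real \<Rightarrow> real \<Rightarrow> real" where
  "bow d t = 1 - t * (1 - t) * d / 2"

lemma bow_0 [simp]: "bow d 0 = 1" and bow_1 [simp]: "bow d 1 = 1"
  by (simp_all add: bow_def)

lemma bow_bounds:
  assumes "0 \<le> t" "t \<le> 1" "0 \<le> d" "d < 1"
  shows "1 / 2 < bow d t" "bow d t \<le> 1"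
proof -
  have "0 \<le> t * (1 - t)" "t * (1 - t) \<le> 1"
    using assms(1,2) mult_left_le[of "1 - t" t] by simp_all
  then have "0 \<le> t * (1 - t) * d" "t * (1 - t) * d \<le> d"
    using assms(3) mult_left_le_one_le[of d "t * (1 - t)"] by simp_all
  then show "1 / 2 < bow d t" "bow d t \<le> 1"
    using assms(4) unfolding bow_def by linarith+
qed

lemma bow_lt_1: "0 < t \<Longrightarrow> t < 1 \<Longrightarrow> 0 < d \<Longrightarrow> bow d t < 1"
  unfolding bow_def by simp

definition bowed_arc :: "nat \<Rightarrow> mpt \<Rightarrow> mpt \<Rightarrow> real \<Rightarrow> complex" where
  "bowed_arc n A B t = complex_of_real (bow (ccw_dist n A B) t) * cis (angle n A + 2 * pi * (t * ccw_dist n A B))"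

lemma norm_bowed_arc:
  assumes "0 \<le> t" "t \<le> 1"
  shows "norm (bowed_arc n A B t) = bow (ccw_dist n A B) t"
  using bow_bounds(1)[OF assms ccw_dist_nonneg ccw_dist_lt_1, of n A B]
  by (simp add: bowed_arc_def norm_mult)

lemma bowed_arc_in_pint:
  assumes "A \<in> marked n cl" "B \<in> marked n cl" "A \<noteq> B" "t \<in> {0<..<1}"
  shows "bowed_arc n A B t \<in> pint"
  using assms(4) norm_bowed_arc[of t n A B] bow_bounds(1)[OF _ _ ccw_dist_nonneg ccw_dist_lt_1, of t n A B]
    bow_lt_1[OF _ _ ccw_dist_pos[OF assms(1-3)], of t]
  by (auto simp: pint_def)

lemma inj_on_bowed_arc:
  assumes "A \<in> marked n cl" "B \<in> marked n cl" "A \<noteq> B"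
  shows "inj_on (bowed_arc n A B) {0..1}"
proof
  fix s t assume s: "s \<in> {0..1}" and t: "t \<in> {0..1}" and eq: "bowed_arc n A B s = bowed_arc n A B t"
  define d where "d = ccw_dist n A B"
  have d: "0 < d" "d < 1"
    using ccw_dist_pos[OF assms] ccw_dist_lt_1 d_def by auto
  have "cis (angle n A + 2 * pi * (s * d)) = cis (angle n A + 2 * pi * (t * d))"
    using polar_eq_imp(2)[OF _ _ eq[unfolded bowed_arc_def d_def[symmetric]]]
      bow_bounds(1)[of s d] bow_bounds(1)[of t d] s t d by fastforce
  moreover have "\<bar>s * d - t * d\<bar> < 1"
  proof -
    have "\<bar>s - t\<bar> * d \<le> d"
      using s t d by (intro mult_left_le_one_le) auto
    moreover have "\<bar>s * d - t * d\<bar> = \<bar>s - t\<bar> * d"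
      using d by (simp add: abs_mult left_diff_distrib[symmetric])
    ultimately show ?thesis
      using d by linarith
  qed
  ultimately have "s * d = t * d"
    by (rule cis_eq_within_turn)
  then show "s = t"
    using d by simp
qed

lemma homotopic_bowed_arc_ccw_path:
  "homotopic_paths pdisk (bowed_arc n A B) (ccw_path n A B)"
proof (rule homotopic_paths_linear)
  show "path (bowed_arc n A B)" "path (ccw_path n A B)"
    unfolding bowed_arc_def bow_def ccw_path_eq path_def by (auto intro!: continuous_intros)
  show "pathstart (ccw_path n A B) = pathstart (bowed_arc n A B)"
    "pathfinish (ccw_path n A B) = pathfinish (bowed_arc n A B)"
    unfolding ccw_path_eq bowed_arc_def pathstart_def pathfinish_def by simp_all
next
  fix t :: real assume "t \<in> {0..1}"
  then have r: "1 / 2 < bow (ccw_dist n A B) t" "bow (ccw_dist n A B) t \<le> 1"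
    using bow_bounds[OF _ _ ccw_dist_nonneg ccw_dist_lt_1] by auto
  define w where "w = cis (angle n A + 2 * pi * (t * ccw_dist n A B))"
  show "closed_segment (bowed_arc n A B t) (ccw_path n A B t) \<subseteq> pdisk"
  proof
    fix z assume "z \<in> closed_segment (bowed_arc n A B t) (ccw_path n A B t)"
    then obtain u where u: "0 \<le> u" "u \<le> 1"
      and z: "z = complex_of_real ((1 - u) * bow (ccw_dist n A B) t + u) * w"
      unfolding closed_segment_def bowed_arc_def ccw_path_eq w_def
      by (auto simp: scaleR_conv_of_real algebra_simps)
    have "(1 - u) * bow (ccw_dist n A B) t + u = bow (ccw_dist n A B) t + u * (1 - bow (ccw_dist n A B) t)"
      by (simp add: algebra_simps)
    moreover have "0 \<le> u * (1 - bow (ccw_dist n A B) t)" "u * (1 - bow (ccw_dist n A B) t) \<le> 1 - bow (ccw_dist n A B) t"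
      using u r by (simp_all add: mult_left_le_one_le)
    ultimately have "0 < (1 - u) * bow (ccw_dist n A B) t + u" "(1 - u) * bow (ccw_dist n A B) t + u \<le> 1"
      using r by linarith+
    moreover have "norm z = \<bar>(1 - u) * bow (ccw_dist n A B) t + u\<bar>"
      unfolding z w_def by (simp only: norm_mult norm_of_real norm_cis mult_1_right)
    ultimately show "z \<in> pdisk"
      unfolding pdisk_def by auto
  qed
qed

lemma bowed_arc_in_reps:
  assumes "A \<in> marked n cl" "B \<in> marked n cl" "A \<noteq> B"
  shows "bowed_arc n A B \<in> reps n A B"
proof -
  have "path (bowed_arc n A B)"
    unfolding bowed_arc_def bow_def path_def by (auto intro!: continuous_intros)
  moreover have "pathstart (bowed_arc n A B) = pos n A"
    unfolding bowed_arc_def pathstart_def pos_def by simp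
  moreover have "pathfinish (bowed_arc n A B) = pos n B"
    unfolding bowed_arc_def pathfinish_def using cis_angle_ccw_dist[of n A B] by simp
  ultimately show ?thesis
    unfolding reps_def arc_def
    using inj_on_bowed_arc[OF assms] bowed_arc_in_pint[OF assms] homotopic_bowed_arc_ccw_path by auto
qed

lemma path_image_bowed_arc_pintE:
  assumes "z \<in> path_image (bowed_arc n A B)" "z \<in> pint"
  obtains t where "0 < t" "t < 1" "z = bowed_arc n A B t"
proof -
  obtain t where t: "t \<in> {0..1}" "z = bowed_arc n A B t"
    using assms(1) unfolding path_image_def by auto
  then have "t \<noteq> 0" "t \<noteq> 1"
    using assms(2) norm_bowed_arc[of t n A B] by (auto simp: pint_def)
  with t show ?thesis
    by (intro that[of t]) auto
qed

lemma segment_Int_bowed_arc: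
  assumes P: "P \<in> marked n cl" and Q: "Q \<in> marked n cl" and "P \<noteq> Q"
  shows "closed_segment (pos n P) 0 \<inter> path_image (bowed_arc n P Q) \<inter> pint = {}"
proof (rule ccontr)
  assume "closed_segment (pos n P) 0 \<inter> path_image (bowed_arc n P Q) \<inter> pint \<noteq> {}"
  then obtain z where z: "z \<in> closed_segment (pos n P) 0" "z \<in> path_image (bowed_arc n P Q)" "z \<in> pint"
    by blast
  then obtain u where u: "0 \<le> u" "u \<le> 1" "z = (1 - u) *\<^sub>R pos n P"
    unfolding closed_segment_def by auto
  obtain t where t: "0 < t" "t < 1" "z = bowed_arc n P Q t"
    using path_image_bowed_arc_pintE[OF z(2,3)] .
  define d where "d = ccw_dist n P Q"
  have d: "0 < d" "d < 1"
    using ccw_dist_pos[OF P Q \<open>P \<noteq> Q\<close>] ccw_dist_lt_1 d_def by auto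
  have "0 < 1 - u"
    using z(3) u unfolding pint_def by (cases "u = 1") auto
  moreover have "0 < bow d t"
    using bow_bounds(1)[of t d] t d by simp
  moreover have "complex_of_real (bow d t) * cis (angle n P + 2 * pi * (t * d))
      = complex_of_real (1 - u) * cis (angle n P + 2 * pi * 0)"
    using u(3) t(3) unfolding bowed_arc_def pos_def d_def by (simp add: scaleR_conv_of_real)
  ultimately have "cis (angle n P + 2 * pi * (t * d)) = cis (angle n P + 2 * pi * 0)"
    using polar_eq_imp(2) by blast
  moreover have "\<bar>t * d - 0\<bar> < 1"
    using t d mult_strict_mono[of t 1 d 1] by simp
  ultimately have "t * d = 0"
    by (rule cis_eq_within_turn)
  then show False
    using t d by simp
qed

lemma bowed_arcs_Int:
  assumes P: "P \<in> marked n cl" and Q: "Q \<in> marked n cl" and Q': "Q' \<in> marked n cl"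
    and "P \<noteq> Q" "P \<noteq> Q'" "Q \<noteq> Q'"
  shows "path_image (bowed_arc n P Q) \<inter> path_image (bowed_arc n P Q') \<inter> pint = {}"
proof (rule ccontr)
  assume "path_image (bowed_arc n P Q) \<inter> path_image (bowed_arc n P Q') \<inter> pint \<noteq> {}"
  then obtain z where z: "z \<in> path_image (bowed_arc n P Q)" "z \<in> path_image (bowed_arc n P Q')" "z \<in> pint"
    by blast
  obtain s where s: "0 < s" "s < 1" "z = bowed_arc n P Q s"
    using path_image_bowed_arc_pintE[OF z(1,3)] .
  obtain t where t: "0 < t" "t < 1" "z = bowed_arc n P Q' t"
    using path_image_bowed_arc_pintE[OF z(2,3)] .
  define d d' where "d = ccw_dist n P Q" and "d' = ccw_dist n P Q'"
  have d: "0 < d" "d < 1" "0 < d'" "d' < 1"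
    using ccw_dist_pos[OF P Q] ccw_dist_pos[OF P Q'] ccw_dist_lt_1 assms(4,5) d_def d'_def by auto
  have sd: "0 < s * d" "s * d < 1" and td: "0 < t * d'" "t * d' < 1"
    using s t d mult_strict_mono[of s 1 d 1] mult_strict_mono[of t 1 d' 1] by simp_all
  have polar: "complex_of_real (bow d s) * cis (angle n P + 2 * pi * (s * d))
      = complex_of_real (bow d' t) * cis (angle n P + 2 * pi * (t * d'))"
    using s(3) t(3) unfolding bowed_arc_def d_def d'_def by simp
  have pos: "0 < bow d s" "0 < bow d' t"
    using bow_bounds(1)[of s d] bow_bounds(1)[of t d'] s t d by simp_all
  have "s * d = t * d'"
    using cis_eq_within_turn[OF polar_eq_imp(2)[OF pos polar]] sd td by linarith
  moreover have "s * (1 - s) * d = t * (1 - t) * d'"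
    using polar_eq_imp(1)[OF pos polar] unfolding bow_def by simp
  then have "s * d * (1 - s) = t * d' * (1 - t)"
    by (simp only: ac_simps)
  ultimately have "s = t"
    using t d by auto
  then have "ccw_dist n P Q = ccw_dist n P Q'"
    using \<open>s * d = t * d'\<close> s d_def d'_def by simp
  then show False
    using inj_on_ccw_dist[OF P] Q Q' \<open>Q \<noteq> Q'\<close> by (auto dest: inj_onD)
qed

section \<open>Representatives that must cross\<close>

lemma winding_number_ccw_path:
  assumes "A \<in> marked n cl" "B \<in> marked n cl" "A \<noteq> B"
  shows "winding_number (ccw_path n A B) 0 = complex_of_real (ccw_dist n A B)"
proof -
  define a b where "a = angle n A" and "b = angle n A + 2 * pi * ccw_dist n A B"
  have "a < b"
    using ccw_dist_pos[OF assms] unfolding a_def b_def by simp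
  have path: "ccw_path n A B = part_circlepath 0 1 a b"
    unfolding ccw_path_eq part_circlepath_def linepath_def a_def b_def
    by (simp add: cis_conv_exp algebra_simps)
  have "0 \<notin> path_image (part_circlepath 0 1 a b)"
    unfolding path_image_part_circlepath' by auto
  then have "winding_number (part_circlepath 0 1 a b) 0
      = 1 / (2 * pi * \<i>) * contour_integral (part_circlepath 0 1 a b) (\<lambda>w. 1 / (w - 0))"
    by (rule winding_number_valid_path[OF valid_path_part_circlepath])
  also have "contour_integral (part_circlepath 0 1 a b) (\<lambda>w. 1 / (w - 0))
      = integral {a..b} (\<lambda>t. 1 / (0 + complex_of_real 1 * cis t - 0) * complex_of_real 1 * \<i> * cis t)"
    by (rule contour_integral_part_circlepath_eq[OF \<open>a < b\<close>])
  also have "(\<lambda>t. 1 / (0 + complex_of_real 1 * cis t - 0) * complex_of_real 1 * \<i> * cis t) = (\<lambda>t. \<i>)"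
    by (simp add: field_simps)
  also have "integral {a..b} (\<lambda>t. \<i>) = (b - a) *\<^sub>R \<i>"
    using \<open>a < b\<close> by simp
  finally show ?thesis
    unfolding path a_def b_def by (simp add: scaleR_conv_of_real field_simps)
qed

lemma repsD:
  assumes "g \<in> reps n A B"
  shows "arc g" "g 0 = pos n A" "g 1 = pos n B" "\<And>t. t \<in> {0<..<1} \<Longrightarrow> g t \<in> pint"
    "homotopic_paths pdisk g (ccw_path n A B)"
  using assms unfolding reps_def pathstart_def pathfinish_def by auto

lemma norm_reps:
  assumes "g \<in> reps n A B" "t \<in> {0..1}"
  shows "0 < norm (g t)" "norm (g t) \<le> 1" "norm (g t) = 1 \<Longrightarrow> t = 0 \<or> t = 1"
proof -
  have "t = 0 \<or> t = 1 \<or> t \<in> {0<..<1}"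
    using assms(2) by auto
  then have "(t = 0 \<or> t = 1) \<and> norm (g t) = 1 \<or> (t \<in> {0<..<1} \<and> g t \<in> pint)"
    using repsD[OF assms(1)] by (auto simp: pos_def)
  then show "0 < norm (g t)" "norm (g t) \<le> 1" "norm (g t) = 1 \<Longrightarrow> t = 0 \<or> t = 1"
    unfolding pint_def by auto
qed

text \<open>Homotopy invariance of the winding number about the puncture fixes the total change of
  a continuous argument along any representative.\<close>
lemma reps_angle_lift:
  assumes A: "A \<in> marked n cl" and B: "B \<in> marked n cl" and "A \<noteq> B" and g: "g \<in> reps n A B"
  obtains \<theta> where "continuous_on {0..1} \<theta>"
    "\<And>t. t \<in> {0..1} \<Longrightarrow> g t = complex_of_real (norm (g t)) * cis (\<theta> t)"
    "\<theta> 0 = angle n A" "\<theta> 1 = angle n A + 2 * pi * ccw_dist n A B"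
proof -
  have "path g"
    using repsD(1)[OF g] by (rule arc_imp_path)
  moreover have "0 \<notin> path_image g"
    using norm_reps(1)[OF g] unfolding path_image_def by force
  ultimately obtain q where q: "path q" "pathfinish q - pathstart q = 2 * of_real pi * \<i> * winding_number g 0"
      "\<And>t. t \<in> {0..1} \<Longrightarrow> g t = 0 + exp (q t)"
    using winding_number_as_continuous_log by blast
  have "homotopic_paths (-{0}) g (ccw_path n A B)"
    using homotopic_paths_subset[OF repsD(5)[OF g]] unfolding pdisk_def by auto
  then have "winding_number g 0 = complex_of_real (ccw_dist n A B)"
    using winding_number_ccw_path[OF A B \<open>A \<noteq> B\<close>] by (simp add: winding_number_homotopic_paths)
  then have q1: "Im (q 1) = Im (q 0) + 2 * pi * ccw_dist n A B"
    using arg_cong[OF q(2), of Im] unfolding pathstart_def pathfinish_def by simp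
  have polar: "g t = complex_of_real (norm (g t)) * cis (Im (q t))" if "t \<in> {0..1}" for t
    using q(3)[OF that] by (simp add: exp_eq_polar norm_mult)
  have "cis (Im (q 0)) = cis (angle n A)"
    using polar_eq_imp(2)[of "norm (g 0)" 1] polar[of 0] repsD(2)[OF g] by (simp add: pos_def)
  then obtain k :: int where k: "Im (q 0) = angle n A + 2 * pi * real_of_int k"
    by (rule cis_eq_cisE)
  show ?thesis
  proof
    show "continuous_on {0..1} (\<lambda>t. Im (q t) - 2 * pi * real_of_int k)"
      using q(1) unfolding path_def by (intro continuous_intros)
    show "g t = complex_of_real (norm (g t)) * cis (Im (q t) - 2 * pi * real_of_int k)" if "t \<in> {0..1}" for t
      using polar[OF that] cis_add_int_2pi[of "Im (q t) - 2 * pi * real_of_int k" k] by simp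
  qed (use k q1 in simp_all)
qed

lemma reps_meet_segment:
  assumes R: "R \<in> marked n cl" and S: "S \<in> marked n cl" and P: "P \<in> marked n cl"
    and "R \<noteq> S" "P \<noteq> R" and between: "ccw_dist n R P < ccw_dist n R S" and g: "g \<in> reps n R S"
  shows "closed_segment (pos n P) 0 \<inter> path_image g \<inter> pint \<noteq> {}"
proof -
  obtain \<theta> where \<theta>: "continuous_on {0..1} \<theta>"
      "\<And>t. t \<in> {0..1} \<Longrightarrow> g t = complex_of_real (norm (g t)) * cis (\<theta> t)"
      "\<theta> 0 = angle n R" "\<theta> 1 = angle n R + 2 * pi * ccw_dist n R S"
    using reps_angle_lift[OF R S \<open>R \<noteq> S\<close> g] by blast
  define v where "v = angle n R + 2 * pi * ccw_dist n R P"
  have "\<theta> 0 < v" "v < \<theta> 1"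
    using ccw_dist_pos[OF R P] \<open>P \<noteq> R\<close> between unfolding \<theta>(3,4) v_def by auto
  then obtain t where t: "0 \<le> t" "t \<le> 1" "\<theta> t = v"
    using IVT'[of \<theta> 0 v 1] \<theta>(1) by auto
  then have "t \<in> {0<..<1}"
    using \<open>\<theta> 0 < v\<close> \<open>v < \<theta> 1\<close> by (cases "t = 0"; cases "t = 1") auto
  then have gt: "g t \<in> pint"
    by (rule repsD(4)[OF g])
  have "g t = (1 - (1 - norm (g t))) *\<^sub>R pos n P + (1 - norm (g t)) *\<^sub>R 0"
    using \<theta>(2)[of t] t cis_angle_ccw_dist[of n R P] unfolding v_def by (simp add: scaleR_conv_of_real)
  moreover have "0 \<le> 1 - norm (g t)" "1 - norm (g t) \<le> 1"
    using gt unfolding pint_def by auto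
  ultimately have "g t \<in> closed_segment (pos n P) 0"
    unfolding closed_segment_def by blast
  moreover have "g t \<in> path_image g"
    unfolding path_image_def using t by auto
  ultimately show ?thesis
    using gt by blast
qed

lemma vector_2_eq_iff [simp]: "(vector [a, b] :: 'a::zero^2) = vector [c, d] \<longleftrightarrow> a = c \<and> b = d"
  by (metis vector_2)

lemma continuous_on_vector_2 [continuous_intros]:
  fixes f g :: "'a::topological_space \<Rightarrow> real"
  assumes "continuous_on S f" "continuous_on S g"
  shows "continuous_on S (\<lambda>x. vector [f x, g x] :: real^2)"
proof -
  have eq: "(\<lambda>x. vector [f x, g x] :: real^2) = (\<lambda>x. \<chi> i. if i = 1 then f x else g x)"
    by (auto simp: vec_eq_iff forall_2)
  show ?thesis
    unfolding eq
  proof (rule continuous_on_vec_lambda)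
    fix i :: 2
    show "continuous_on S (\<lambda>x. if i = 1 then f x else g x)"
      using assms by (cases "i = 1") simp_all
  qed
qed

text \<open>A corollary of the Fashoda theorem, applied below with \<open>\<theta>\<close> a continuous argument and \<open>\<rho>\<close>
  the modulus of a representative.\<close>
lemma interlaced_polar_paths_meet:
  fixes \<theta> \<rho> \<theta>' \<rho>' :: "real \<Rightarrow> real"
  assumes cont: "continuous_on {0..1} \<theta>" "continuous_on {0..1} \<rho>"
      "continuous_on {0..1} \<theta>'" "continuous_on {0..1} \<rho>'"
    and le1: "\<And>t. t \<in> {0..1} \<Longrightarrow> \<rho> t \<le> 1" "\<And>t. t \<in> {0..1} \<Longrightarrow> \<rho>' t \<le> 1"
    and ends: "\<rho> 0 = 1" "\<rho> 1 = 1" "\<rho>' 0 = 1" "\<rho>' 1 = 1"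
    and interlace: "\<theta> 0 < \<theta>' 0" "\<theta>' 0 < \<theta> 1" "\<theta> 1 < \<theta>' 1"
  obtains s t where "s \<in> {0..1}" "t \<in> {0..1}" "\<theta> s = \<theta>' t" "\<rho> s = \<rho>' t"
proof -
  define f g where "f t = (vector [\<theta> t, - \<rho> t] :: real^2)" and "g t = (vector [\<theta>' t, - \<rho>' t] :: real^2)" for t
  have paths: "path f" "path g"
    unfolding path_def f_def g_def using cont by (auto intro!: continuous_intros)
  then have "bounded (path_image f \<union> path_image g)"
    by (intro compact_imp_bounded compact_Un compact_path_image)
  then obtain K where K: "\<And>z. z \<in> path_image f \<union> path_image g \<Longrightarrow> norm z \<le> K"
    unfolding bounded_iff by blast
  have box: "path_image h \<subseteq> cbox (vector [- K, - 1]) (vector [K, K])"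
    if "path_image h \<subseteq> path_image f \<union> path_image g" "\<And>t. t \<in> {0..1} \<Longrightarrow> - 1 \<le> h t $ 2" for h :: "real \<Rightarrow> real^2"
  proof
    fix z :: "real^2" assume z: "z \<in> path_image h"
    then have "\<bar>z $ 1\<bar> \<le> K" "\<bar>z $ 2\<bar> \<le> K"
      using K[of z] component_le_norm_cart[of z 1] component_le_norm_cart[of z 2] that(1) by auto
    moreover have "- 1 \<le> z $ 2"
      using z that(2) unfolding path_image_def by auto
    ultimately show "z \<in> cbox (vector [- K, - 1]) (vector [K, K])"
      unfolding mem_box_cart forall_2 by auto
  qed
  have fbox: "path_image f \<subseteq> cbox (vector [- K, - 1]) (vector [K, K])"
    by (rule box) (use le1 in \<open>auto simp: f_def\<close>)
  have gbox: "path_image g \<subseteq> cbox (vector [- K, - 1]) (vector [K, K])"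
    by (rule box) (use le1 in \<open>auto simp: g_def\<close>)
  obtain z where "z \<in> path_image f" "z \<in> path_image g"
  proof (rule fashoda_interlace[OF paths fbox gbox])
  qed (use ends interlace in \<open>simp_all add: pathstart_def pathfinish_def f_def g_def\<close>)
  then obtain s t where st: "s \<in> {0..1}" "t \<in> {0..1}" and eq: "f s = g t"
    unfolding path_image_def by auto
  have "\<theta> s = \<theta>' t" "\<rho> s = \<rho>' t"
    using eq unfolding f_def g_def by simp_all
  then show ?thesis
    using that st by blast
qed

lemma ccw_endpoints_interlace:
  assumes X_between: "0 < ccw_dist n R X" "ccw_dist n R X < ccw_dist n R S"
    and P_outside: "ccw_dist n R S \<le> ccw_dist n R P"
  obtains m :: int where
    "angle n P + 2 * pi * m < angle n R + 2 * pi"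
    "angle n R + 2 * pi < angle n P + 2 * pi * ccw_dist n P X + 2 * pi * m"
    "angle n P + 2 * pi * ccw_dist n P X + 2 * pi * m < angle n R + 2 * pi * ccw_dist n R S + 2 * pi"
proof
  define m where "m = - \<lfloor>turn n P - turn n R\<rfloor>"
  have dP: "ccw_dist n R P = turn n P - turn n R + m"
    unfolding ccw_dist_def frac_def m_def by simp
  have PX: "ccw_dist n P X = ccw_dist n R X - ccw_dist n R P + 1"
    using X_between P_outside by (intro ccw_dist_via) simp
  have scale: "2 * pi * x < 2 * pi * y" if "x < y" for x y :: real
    using that by simp
  have "turn n P + m < turn n R + 1"
    using ccw_dist_lt_1[of n R P] dP by linarith
  then show "angle n P + 2 * pi * m < angle n R + 2 * pi"
    using scale by (fastforce simp: angle_eq_turn algebra_simps)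
  have "turn n R + 1 < turn n P + ccw_dist n P X + m"
    using X_between dP PX by linarith
  then show "angle n R + 2 * pi < angle n P + 2 * pi * ccw_dist n P X + 2 * pi * m"
    using scale by (fastforce simp: angle_eq_turn algebra_simps)
  have "turn n P + ccw_dist n P X + m < turn n R + ccw_dist n R S + 1"
    using X_between dP PX by linarith
  then show "angle n P + 2 * pi * ccw_dist n P X + 2 * pi * m < angle n R + 2 * pi * ccw_dist n R S + 2 * pi"
    using scale by (fastforce simp: angle_eq_turn algebra_simps)
qed

lemma reps_meet_reps:
  assumes R: "R \<in> marked n cl" and S: "S \<in> marked n cl" and P: "P \<in> marked n cl"
    and X: "X \<in> marked n cl" and "R \<noteq> S" "P \<noteq> X"
    and X_between: "0 < ccw_dist n R X" "ccw_dist n R X < ccw_dist n R S"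
    and P_outside: "ccw_dist n R S \<le> ccw_dist n R P"
    and g: "g \<in> reps n R S" and g': "g' \<in> reps n P X"
  shows "path_image g \<inter> path_image g' \<inter> pint \<noteq> {}"
proof -
  obtain \<theta> where \<theta>: "continuous_on {0..1} \<theta>"
      "\<And>t. t \<in> {0..1} \<Longrightarrow> g t = complex_of_real (norm (g t)) * cis (\<theta> t)"
      "\<theta> 0 = angle n R" "\<theta> 1 = angle n R + 2 * pi * ccw_dist n R S"
    using reps_angle_lift[OF R S \<open>R \<noteq> S\<close> g] by blast
  obtain \<theta>' where \<theta>': "continuous_on {0..1} \<theta>'"
      "\<And>t. t \<in> {0..1} \<Longrightarrow> g' t = complex_of_real (norm (g' t)) * cis (\<theta>' t)"
      "\<theta>' 0 = angle n P" "\<theta>' 1 = angle n P + 2 * pi * ccw_dist n P X"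
    using reps_angle_lift[OF P X \<open>P \<noteq> X\<close> g'] by blast
  obtain m :: int where interlace: "\<theta>' 0 + 2 * pi * m < \<theta> 0 + 2 * pi"
    "\<theta> 0 + 2 * pi < \<theta>' 1 + 2 * pi * m" "\<theta>' 1 + 2 * pi * m < \<theta> 1 + 2 * pi"
    using ccw_endpoints_interlace[OF X_between P_outside] unfolding \<theta>(3,4) \<theta>'(3,4) by (metis add.commute)
  have norms: "norm (g 0) = 1" "norm (g 1) = 1" "norm (g' 0) = 1" "norm (g' 1) = 1"
    using repsD(2,3)[OF g] repsD(2,3)[OF g'] by (simp_all add: pos_def)
  obtain s t where st: "s \<in> {0..1}" "t \<in> {0..1}"
    and angle: "\<theta>' s + 2 * pi * m = \<theta> t + 2 * pi" and norm: "norm (g' s) = norm (g t)"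
  proof (rule interlaced_polar_paths_meet[of "\<lambda>t. \<theta>' t + 2 * pi * m" "\<lambda>t. norm (g' t)" "\<lambda>t. \<theta> t + 2 * pi" "\<lambda>t. norm (g t)"])
    show "continuous_on {0..1} (\<lambda>t. norm (g' t))" "continuous_on {0..1} (\<lambda>t. norm (g t))"
      using arc_imp_path[OF repsD(1)[OF g]] arc_imp_path[OF repsD(1)[OF g']]
      unfolding path_def by (auto intro!: continuous_intros)
  qed (use \<theta>(1) \<theta>'(1) norm_reps(2)[OF g] norm_reps(2)[OF g'] norms interlace
      in \<open>auto intro!: continuous_intros\<close>)
  have "\<theta>' s = \<theta> t + 2 * pi * real_of_int (1 - m)"
    using angle by (simp add: algebra_simps)
  then have "cis (\<theta>' s) = cis (\<theta> t)"
    by (simp only: cis_add_int_2pi)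
  then have same: "g' s = g t"
    using \<theta>(2)[OF st(2)] \<theta>'(2)[OF st(1)] norm by simp
  have "t \<in> {0<..<1}"
  proof (rule ccontr)
    assume "t \<notin> {0<..<1}"
    then have "t = 0 \<or> t = 1"
      using st(2) by auto
    moreover from this have "s = 0 \<or> s = 1"
      using norm_reps(3)[OF g' st(1)] norm norms by auto
    ultimately show False
      using angle interlace by auto
  qed
  then have "g t \<in> pint"
    by (rule repsD(4)[OF g])
  moreover have "g t \<in> path_image g" "g t \<in> path_image g'"
    using st same unfolding path_image_def by (auto intro!: image_eqI[where x = s])
  ultimately show ?thesis
    by blast
qed

section \<open>The edges at a marked point form a triangulation\<close>

lemma Arc_in_tagged_edges_iff [simp]:
  "Arc P Q \<in> tagged_edges n cl \<longleftrightarrow> P \<in> marked n cl \<and> Q \<in> marked n cl \<and> P \<noteq> Q \<and> Q \<noteq> succ_pt P"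
  and Punct_in_tagged_edges_iff [simp]: "Punct P s \<in> tagged_edges n cl \<longleftrightarrow> P \<in> marked n cl"
  unfolding tagged_edges_def by blast+

lemma icount_eq_0_iff [simp]: "icount S = 0 \<longleftrightarrow> S = {}"
  by (auto simp: icount_def zero_enat_def)

lemma INF_enat_eq_0_iff: "(INF x\<in>A. f x) = (0::enat) \<longleftrightarrow> (\<exists>x\<in>A. f x = 0)"
proof
  assume inf: "(INF x\<in>A. f x) = 0"
  show "\<exists>x\<in>A. f x = 0"
  proof (rule ccontr)
    assume "\<not> (\<exists>x\<in>A. f x = 0)"
    then have "1 \<le> f x" if "x \<in> A" for x
      using that by (metis ileI1 one_eSuc not_gr_zero)
    then have "1 \<le> (INF x\<in>A. f x)"
      by (rule INF_greatest)
    with inf show False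
      by simp
  qed
next
  assume "\<exists>x\<in>A. f x = 0"
  then show "(INF x\<in>A. f x) = 0"
    by (metis INF_lower le_zero_eq)
qed

lemma crosses_Arc_Arc:
  "crosses n (Arc P Q) (Arc R S) \<longleftrightarrow>
    (\<forall>g\<in>reps n P Q. \<forall>g'\<in>reps n R S. path_image g \<inter> path_image g' \<inter> pint \<noteq> {})"
  and crosses_Punct_Arc:
  "crosses n (Punct P s) (Arc R S) \<longleftrightarrow> (\<forall>g\<in>reps n R S. closed_segment (pos n P) 0 \<inter> path_image g \<inter> pint \<noteq> {})"
  and crosses_Arc_Punct:
  "crosses n (Arc R S) (Punct P s) \<longleftrightarrow> (\<forall>g\<in>reps n R S. closed_segment (pos n P) 0 \<inter> path_image g \<inter> pint \<noteq> {})"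
  and crosses_Punct_Punct: "crosses n (Punct P s) (Punct Q t) \<longleftrightarrow> P \<noteq> Q \<and> s \<noteq> t"
  by (simp_all add: crosses_def INF_enat_eq_0_iff)

lemma star_edge_cases [consumes 2, case_names Arc Punct]:
  assumes "E \<in> tagged_edges n cl" "start E = P"
  obtains Q where "E = Arc P Q" "Q \<in> marked n cl" "P \<noteq> Q"
    | s where "E = Punct P s"
  using assms by (cases E) auto

lemma star_edges_noncrossing:
  assumes P: "P \<in> marked n cl"
    and E: "E \<in> tagged_edges n cl" "start E = P" and F: "F \<in> tagged_edges n cl" "start F = P"
    and "E \<noteq> F"
  shows "\<not> crosses n E F"
  using E
proof (cases rule: star_edge_cases)
  case E': (Arc Q)
  from F show ?thesis
  proof (cases rule: star_edge_cases)
    case (Arc Q')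
    then have "path_image (bowed_arc n P Q) \<inter> path_image (bowed_arc n P Q') \<inter> pint = {}"
      using bowed_arcs_Int[OF P] E' \<open>E \<noteq> F\<close> by auto
    moreover have "bowed_arc n P Q \<in> reps n P Q" "bowed_arc n P Q' \<in> reps n P Q'"
      using bowed_arc_in_reps[OF P] E' Arc by auto
    ultimately show ?thesis
      unfolding E'(1) Arc(1) crosses_Arc_Arc by blast
  next
    case (Punct s)
    show ?thesis
      using segment_Int_bowed_arc[OF P E'(2,3)] bowed_arc_in_reps[OF P E'(2,3)]
      unfolding E'(1) Punct crosses_Arc_Punct by blast
  qed
next
  case E': (Punct s)
  from F show ?thesis
  proof (cases rule: star_edge_cases)
    case (Arc Q)
    show ?thesis
      using segment_Int_bowed_arc[OF P Arc(2,3)] bowed_arc_in_reps[OF P Arc(2,3)]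
      unfolding E'(1) Arc(1) crosses_Punct_Arc by blast
  qed (use E' in \<open>simp add: crosses_Punct_Punct\<close>)
qed

lemma crosses_star_edge:
  assumes P: "P \<in> marked n cl" and E: "E \<in> tagged_edges n cl" "start E \<noteq> P"
  shows "\<exists>F\<in>{E \<in> tagged_edges n cl. start E = P}. crosses n E F"
proof (cases E)
  case (Punct R s)
  then have "Punct P (\<not> s) \<in> {E \<in> tagged_edges n cl. start E = P}" "crosses n E (Punct P (\<not> s))"
    using P E by (auto simp: crosses_Punct_Punct)
  then show ?thesis
    by blast
next
  case (Arc R S)
  then have R: "R \<in> marked n cl" and S: "S \<in> marked n cl" and "R \<noteq> S" "S \<noteq> succ_pt R" "P \<noteq> R"
    using E by auto
  show ?thesis
  proof (cases "ccw_dist n R P < ccw_dist n R S")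
    case True
    then have "crosses n E (Punct P True)"
      using reps_meet_segment[OF R S P \<open>R \<noteq> S\<close> \<open>P \<noteq> R\<close>] Arc by (simp add: crosses_Arc_Punct)
    then show ?thesis
      using P by force
  next
    case False
    obtain X where X: "X \<in> marked n cl" "X \<noteq> succ_pt P" "0 < ccw_dist n R X" "ccw_dist n R X < ccw_dist n R S"
      using marked_between_avoiding_succ[OF R S P \<open>R \<noteq> S\<close> \<open>S \<noteq> succ_pt R\<close> \<open>P \<noteq> R\<close>] .
    with False have "X \<noteq> P"
      by auto
    then have "crosses n E (Arc P X)"
      using reps_meet_reps[OF R S P X(1) \<open>R \<noteq> S\<close> _ X(3,4)] False Arc by (auto simp: crosses_Arc_Arc)
    moreover have "Arc P X \<in> {E \<in> tagged_edges n cl. start E = P}"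
      using P X \<open>X \<noteq> P\<close> by auto
    ultimately show ?thesis
      by blast
  qed
qed

lemma tagged_triangulation_star:
  assumes "P \<in> marked n cl"
  shows "tagged_triangulation n cl {E \<in> tagged_edges n cl. start E = P}"
  using star_edges_noncrossing[OF assms] crosses_star_edge[OF assms]
  unfolding tagged_triangulation_def by blast

theorem lemma4p2:
  fixes n h :: nat
  assumes "1 \<le> n" and "1 \<le> h" and "h \<le> n"
  shows "(\<forall>a::int. tagged_triangulation n False
             {E \<in> tagged_edges n False. start E = (h, Fin a)})
       \<and> (\<forall>a::lab. tagged_triangulation n True
             {E \<in> tagged_edges n True. start E = (h, a)})"
proof (intro conjI allI)
  fix a :: int
  show "tagged_triangulation n False {E \<in> tagged_edges n False. start E = (h, Fin a)}"
    using assms by (intro tagged_triangulation_star marked_Fin)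
next
  fix a :: lab
  have "(h, a) \<in> marked n True"
    using assms unfolding marked_def by (cases a) auto
  then show "tagged_triangulation n True {E \<in> tagged_edges n True. start E = (h, a)}"
    by (rule tagged_triangulation_star)
qed

end
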